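(* Let $G$ be a graph on $n$ vertices with $m$ edges, let $t\in\mathbb{N}$, and let $F_1,F_2$ be arbitrary graphs, with $r=|V(F_1)|$. Suppose $G$ does not contain the disjoint union $F_1\cup F_2$ as a subgraph. Then for any copy of $F_1$ in $G$, with vertex set $U$, there is a set of $t$ vertices of $U$ whose common neighbourhood in $V(G)\setminus U$ has size at least \[\frac{m'-(n-r)(t-1)}{r-t+1}\Big/\binom{r}{t},\qquad\text{where } m'=m-\mathrm{ex}(n-r,F_2)-\binom{r}{2}.\]
   Context: $\mathrm{ex}(n,F)$ is the maximum number of edges in a graph on $n$ vertices not containing $F$ as a (not necessarily induced) subgraph. $F_1\cup F_2$ denotes the vertex-disjoint union of $F_1$ and $F_2$. *)

theory Defs
  imports Complex_Main
begin

definition graph :: "'a set \<Rightarrow> 'a set set \<Rightarrow> bool" where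
  "graph V E \<longleftrightarrow> finite V \<and> (\<forall>e\<in>E. e \<subseteq> V \<and> card e = 2)"

definition embedding ::
  "('b \<Rightarrow> 'a) \<Rightarrow> 'b set \<Rightarrow> 'b set set \<Rightarrow> 'a set \<Rightarrow> 'a set set \<Rightarrow> bool" where
  "embedding f VH EH V E \<longleftrightarrow>
     inj_on f VH \<and> f ` VH \<subseteq> V \<and> (\<forall>e\<in>EH. f ` e \<in> E)"

definition contains :: "'a set \<Rightarrow> 'a set set \<Rightarrow> 'b set \<Rightarrow> 'b set set \<Rightarrow> bool" where
  "contains V E VH EH \<longleftrightarrow> (\<exists>f. embedding f VH EH V E)"

definition disj_union_V :: "'b set \<Rightarrow> 'c set \<Rightarrow> ('b + 'c) set" where
  "disj_union_V V1 V2 = Inl ` V1 \<union> Inr ` V2"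

definition disj_union_E :: "'b set set \<Rightarrow> 'c set set \<Rightarrow> ('b + 'c) set set" where
  "disj_union_E E1 E2 = (\<lambda>e. Inl ` e) ` E1 \<union> (\<lambda>e. Inr ` e) ` E2"

text \<open>Turan number ex(n, F): maximum number of edges of a graph on n vertices
  (taken as {0..<n}) not containing F as a subgraph.  (Sup of an empty set of
  naturals is 0; this convention is irrelevant for the theorem below.)\<close>

definition ex :: "nat \<Rightarrow> 'b set \<Rightarrow> 'b set set \<Rightarrow> nat" where
  "ex n VF EF = Sup {card E | E. graph {0..<n} E \<and> \<not> contains {0..<n} E VF EF}"

definition common_nbhd :: "'a set set \<Rightarrow> 'a set \<Rightarrow> 'a set \<Rightarrow> 'a set" where
  "common_nbhd E T W = {v \<in> W. \<forall>u\<in>T. {u, v} \<in> E}"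

end

theory Submission
  imports Defs
begin

text \<open>Split the edges of G into those inside the copy U of F1, those inside W = V(G) - U,
  and those between U and W. There are at most (r choose 2) edges inside U, and the graph on W
  is F2-free (a copy of F2 there would complete U to a copy of F1 \<union> F2), so it has at most
  ex(n - r, F2) edges. Hence the degrees d(v) into U of the vertices v \<in> W sum to at least m'.
  Double counting the pairs (T, v) of a t-subset T of U and a vertex v \<in> W adjacent to all of
  T, the sum of |N(T) \<inter> W| over all T equals the sum of (d(v) choose t) over W, and
  (d choose t) \<ge> (d - t + 1)/(r - t + 1) for d \<le> r. Some T is at least as good as the average over the (r choose t)
  candidates.\<close>

lemma finite_edges: "graph V E \<Longrightarrow> finite E"
  unfolding graph_def by (meson Pow_iff finite_Pow_iff finite_subset subsetI)

lemma contains_disj_union_if_disjoint_embeddings: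
  assumes f: "embedding f V1 E1 V E" and h: "embedding h V2 E2 V E"
    and disjoint: "f ` V1 \<inter> h ` V2 = {}"
  shows "contains V E (disj_union_V V1 V2) (disj_union_E E1 E2)"
proof -
  have "inj_on (case_sum f h) (Inl ` V1)" "inj_on (case_sum f h) (Inr ` V2)"
    using f h by (auto simp: embedding_def inj_on_def)
  moreover have "case_sum f h ` Inl ` V1 \<inter> case_sum f h ` Inr ` V2 = {}"
    using disjoint by (simp add: image_image)
  ultimately have "inj_on (case_sum f h) (disj_union_V V1 V2)"
    unfolding disj_union_V_def inj_on_Un by blast
  moreover have "case_sum f h ` disj_union_V V1 V2 \<subseteq> V"
    using f h by (auto simp: embedding_def disj_union_V_def)
  moreover have "\<forall>e\<in>disj_union_E E1 E2. case_sum f h ` e \<in> E"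
    using f h by (auto simp: embedding_def disj_union_E_def image_image)
  ultimately show ?thesis
    unfolding contains_def embedding_def by blast
qed

lemma contains_if_contains_image:
  assumes g: "inj_on g V" and "graph V E"
    and "contains (g ` V) ((`) g ` E) VH EH"
  shows "contains V E VH EH"
proof -
  obtain h where h: "embedding h VH EH (g ` V) ((`) g ` E)"
    using assms(3) by (auto simp: contains_def)
  let ?g' = "inv_into V g"
  have "inj_on ?g' (g ` V)"
    using g by (simp add: inj_on_inv_into)
  then have "inj_on (?g' \<circ> h) VH"
    using h by (auto simp: embedding_def intro: comp_inj_on inj_on_subset)
  moreover have "(?g' \<circ> h) ` VH \<subseteq> V"
    using h by (auto simp: embedding_def inv_into_into)
  moreover have "(?g' \<circ> h) ` e \<in> E" if "e \<in> EH" for e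
  proof -
    obtain e0 where "e0 \<in> E" "h ` e = g ` e0"
      using h \<open>e \<in> EH\<close> by (auto simp: embedding_def)
    moreover have "e0 \<subseteq> V"
      using \<open>graph V E\<close> \<open>e0 \<in> E\<close> by (auto simp: graph_def)
    ultimately show ?thesis
      using g by (metis image_comp inv_into_image_cancel)
  qed
  ultimately show ?thesis
    unfolding contains_def embedding_def by blast
qed

lemma card_le_ex_if_not_contains:
  assumes G: "graph V E" and free: "\<not> contains V E VF EF"
  shows "card E \<le> ex (card V) VF EF"
proof -
  let ?n = "card V"
  obtain g where g: "bij_betw g V {0..<?n}"
    using G by (metis graph_def atLeast0LessThan card_lessThan finite_same_card_bij finite_lessThan)
  then have "inj_on g V" "g ` V = {0..<?n}"
    by (auto simp: bij_betw_def)
  have "E \<subseteq> Pow V"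
    using G by (auto simp: graph_def)
  then have "inj_on ((`) g) E"
    using \<open>inj_on g V\<close> by (meson Union_least PowD inj_on_image inj_on_subset)
  then have card_image_E: "card ((`) g ` E) = card E"
    by (rule card_image)
  have "graph {0..<?n} ((`) g ` E)"
    using G \<open>g ` V = {0..<?n}\<close> \<open>inj_on g V\<close>
    by (auto simp: graph_def card_image inj_on_subset)
  moreover have "\<not> contains {0..<?n} ((`) g ` E) VF EF"
    using contains_if_contains_image[OF \<open>inj_on g V\<close> G] free \<open>g ` V = {0..<?n}\<close> by metis
  moreover have "bdd_above {card E' | E'. graph {0..<?n} E' \<and> \<not> contains {0..<?n} E' VF EF}"
    by (rule bdd_aboveI[of _ "card (Pow {0..<?n})"])
       (auto simp: graph_def intro!: card_mono)
  ultimately show ?thesis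
    unfolding ex_def by (metis (mono_tags, lifting) card_image_E cSup_upper mem_Collect_eq)
qed

lemma card_edges_within_le:
  assumes "graph V E" and "finite U"
  shows "card {e\<in>E. e \<subseteq> U} \<le> card U choose 2"
proof -
  have "card {e\<in>E. e \<subseteq> U} \<le> card {B. B \<subseteq> U \<and> card B = 2}"
    using assms by (intro card_mono) (auto simp: graph_def)
  then show ?thesis
    using n_subsets[OF \<open>finite U\<close>] by simp
qed

lemma card_edges_le_inside_outside_crossing:
  assumes G: "graph V E" and "U \<subseteq> V"
  shows "card E \<le> card {e\<in>E. e \<subseteq> U} + card {e\<in>E. e \<subseteq> V - U}
                    + (\<Sum>v\<in>V - U. card (common_nbhd E {v} U))"
proof -
  have "finite V" "finite U"
    using G \<open>U \<subseteq> V\<close> by (auto simp: graph_def intro: finite_subset)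
  let ?C = "SIGMA v:V - U. common_nbhd E {v} U"
  let ?edge = "\<lambda>(v, u). {v, u}"
  have finite_C: "finite ?C"
    using \<open>finite V\<close> \<open>finite U\<close> by (intro finite_SigmaI) (simp_all add: common_nbhd_def)
  have crossing: "e \<in> ?edge ` ?C"
    if "e \<in> E" and not_inside: "\<not> e \<subseteq> U" "\<not> e \<subseteq> V - U" for e
  proof -
    have "e \<subseteq> V" "card e = 2"
      using G \<open>e \<in> E\<close> by (auto simp: graph_def)
    moreover obtain v u where "v \<in> e" "v \<notin> U" "u \<in> e" "u \<in> U"
      using not_inside \<open>e \<subseteq> V\<close> by blast
    ultimately have "e = {v, u}" "v \<in> V - U"
      by (metis card_2_iff doubleton_eq_iff insertE singletonD, blast)
    then have "(v, u) \<in> ?C"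
      using \<open>u \<in> U\<close> \<open>e \<in> E\<close> by (simp add: common_nbhd_def)
    then show ?thesis
      using \<open>e = {v, u}\<close> by (intro image_eqI[where x = "(v, u)"]) simp_all
  qed
  have "card E \<le> card ({e\<in>E. e \<subseteq> U} \<union> {e\<in>E. e \<subseteq> V - U} \<union> ?edge ` ?C)"
    using crossing finite_edges[OF G] finite_C by (intro card_mono) auto
  also have "\<dots> \<le> card {e\<in>E. e \<subseteq> U} + card {e\<in>E. e \<subseteq> V - U} + card (?edge ` ?C)"
    by (meson add_le_mono1 card_Un_le order_trans)
  also have "card (?edge ` ?C) \<le> card ?C"
    using finite_C by (rule card_image_le)
  also have "card ?C = (\<Sum>v\<in>V - U. card (common_nbhd E {v} U))"
    using \<open>finite V\<close> \<open>finite U\<close> by (intro card_SigmaI) (simp_all add: common_nbhd_def)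
  finally show ?thesis by simp
qed

lemma sum_card_common_nbhd_subsets:
  assumes "finite U" "finite W"
  shows "(\<Sum>T | T \<subseteq> U \<and> card T = t. card (common_nbhd E T W))
       = (\<Sum>v\<in>W. card (common_nbhd E {v} U) choose t)"
proof -
  let ?Ts = "{T. T \<subseteq> U \<and> card T = t}"
  have finite_Ts: "finite ?Ts"
    using assms by simp
  have adjacent_iff: "v \<in> common_nbhd E T W \<longleftrightarrow> T \<subseteq> common_nbhd E {v} U"
    if "T \<subseteq> U" "v \<in> W" for T v
    using that unfolding common_nbhd_def by (auto simp: subset_iff insert_commute)
  have "(\<Sum>T\<in>?Ts. card (common_nbhd E T W))
      = (\<Sum>T\<in>?Ts. \<Sum>v\<in>W. if v \<in> common_nbhd E T W then 1 else 0)"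
    using \<open>finite W\<close> by (intro sum.cong) (auto simp: common_nbhd_def sum.If_cases Int_def)
  also have "\<dots> = (\<Sum>v\<in>W. \<Sum>T\<in>?Ts. if T \<subseteq> common_nbhd E {v} U then 1 else 0)"
    by (subst sum.swap) (auto intro!: sum.cong simp: adjacent_iff)
  also have "\<dots> = (\<Sum>v\<in>W. card {T. T \<subseteq> common_nbhd E {v} U \<and> card T = t})"
    using finite_Ts
    by (intro sum.cong) (auto simp: sum.If_cases common_nbhd_def intro!: arg_cong[where f = card])
  also have "\<dots> = (\<Sum>v\<in>W. card (common_nbhd E {v} U) choose t)"
    using \<open>finite U\<close> by (simp add: n_subsets common_nbhd_def)
  finally show ?thesis .
qed

lemma card_edges_le_if_disj_union_free:
  assumes G: "graph V E"
    and free: "\<not> contains V E (disj_union_V V1 V2) (disj_union_E E1 E2)"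
    and copy: "embedding f V1 E1 V E"
  shows "card E \<le> (card V1 choose 2) + ex (card V - card V1) V2 E2
                    + (\<Sum>v\<in>V - f ` V1. card (common_nbhd E {v} (f ` V1)))"
proof -
  let ?U = "f ` V1" and ?W = "V - f ` V1"
  have "finite V" "?U \<subseteq> V" "card ?U = card V1"
    using G copy by (auto simp: graph_def embedding_def card_image)
  then have "card ?W = card V - card V1"
    by (simp add: card_Diff_subset finite_subset)
  have "graph ?W {e\<in>E. e \<subseteq> ?W}"
    using G by (auto simp: graph_def)
  moreover have "\<not> contains ?W {e\<in>E. e \<subseteq> ?W} V2 E2"
  proof
    assume "contains ?W {e\<in>E. e \<subseteq> ?W} V2 E2"
    then obtain h where "embedding h V2 E2 ?W {e\<in>E. e \<subseteq> ?W}"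
      by (auto simp: contains_def)
    then have "embedding h V2 E2 V E" "?U \<inter> h ` V2 = {}"
      by (auto simp: embedding_def)
    then show False
      using free contains_disj_union_if_disjoint_embeddings[OF copy] by blast
  qed
  ultimately have "card {e\<in>E. e \<subseteq> ?W} \<le> ex (card V - card V1) V2 E2"
    using card_le_ex_if_not_contains \<open>card ?W = card V - card V1\<close> by metis
  moreover have "card {e\<in>E. e \<subseteq> ?U} \<le> card V1 choose 2"
    using card_edges_within_le[OF G] \<open>finite V\<close> \<open>?U \<subseteq> V\<close> \<open>card ?U = card V1\<close>
    by (metis finite_subset)
  ultimately show ?thesis
    using card_edges_le_inside_outside_crossing[OF G \<open>?U \<subseteq> V\<close>] by linarith
qed

lemma choose_ge_linear:
  fixes d r t :: nat
  assumes "d \<le> r" "t \<le> r"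
  shows "(real d - real t + 1) / (real r - real t + 1) \<le> real (d choose t)"
proof (cases "t \<le> d")
  case True
  then have "(real d - real t + 1) / (real r - real t + 1) \<le> 1"
    using assms by simp
  moreover have "1 \<le> d choose t"
    using True by (simp add: Suc_leI)
  ultimately show ?thesis by linarith
next
  case False
  then have "(real d - real t + 1) / (real r - real t + 1) \<le> 0"
    using assms by (intro divide_nonpos_pos) auto
  then show ?thesis by simp
qed

lemma sum_choose_ge:
  fixes d :: "'a \<Rightarrow> nat"
  assumes "\<And>v. v \<in> W \<Longrightarrow> d v \<le> r" "t \<le> r"
  shows "((\<Sum>v\<in>W. real (d v)) - real (card W) * (real t - 1)) / (real r - real t + 1)
       \<le> (\<Sum>v\<in>W. real (d v choose t))"
proof (cases "finite W")
  case True
  have "((\<Sum>v\<in>W. real (d v)) - real (card W) * (real t - 1)) / (real r - real t + 1)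
      = (\<Sum>v\<in>W. (real (d v) - real t + 1) / (real r - real t + 1))"
    using True by (simp add: sum_divide_distrib[symmetric] sum_subtractf sum.distrib algebra_simps)
  also have "\<dots> \<le> (\<Sum>v\<in>W. real (d v choose t))"
    using assms by (intro sum_mono choose_ge_linear) auto
  finally show ?thesis .
qed simp

lemma sum_card_common_nbhd_ge:
  assumes "finite U" "finite W" "t \<le> card U"
  shows "((\<Sum>v\<in>W. real (card (common_nbhd E {v} U))) - real (card W) * (real t - 1))
           / (real (card U) - real t + 1)
       \<le> (\<Sum>T | T \<subseteq> U \<and> card T = t. real (card (common_nbhd E T W)))"
proof -
  have "card (common_nbhd E {v} U) \<le> card U" for v
    using \<open>finite U\<close> by (intro card_mono) (auto simp: common_nbhd_def)
  then show ?thesis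
    using sum_choose_ge[of W "\<lambda>v. card (common_nbhd E {v} U)" "card U" t] assms
      sum_card_common_nbhd_subsets[OF \<open>finite U\<close> \<open>finite W\<close>, where t = t and E = E]
    by (simp flip: of_nat_sum)
qed

lemma exists_ge_average:
  fixes g :: "'a \<Rightarrow> real"
  assumes "finite A" "A \<noteq> {}" "b \<le> sum g A"
  shows "\<exists>x\<in>A. b / card A \<le> g x"
proof (rule ccontr)
  assume "\<not> ?thesis"
  then have "sum g A < (\<Sum>x\<in>A. b / card A)"
    using assms by (intro sum_strict_mono) auto
  then show False
    using assms by simp
qed

theorem mainTheorem5:
  fixes V :: "'a set" and E :: "'a set set"
    and V1 :: "'b set" and E1 :: "'b set set"
    and V2 :: "'c set" and E2 :: "'c set set"
    and t :: nat and f :: "'b \<Rightarrow> 'a"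
  assumes G: "graph V E"
    and F1: "graph V1 E1"
    and F2: "graph V2 E2"
    and free: "\<not> contains V E (disj_union_V V1 V2) (disj_union_E E1 E2)"
    and copy: "embedding f V1 E1 V E"
    and t: "t \<le> card V1"
  shows "\<exists>T. T \<subseteq> f ` V1 \<and> card T = t \<and>
     real (card (common_nbhd E T (V - f ` V1))) \<ge>
       ((real (card E) - real (ex (card V - card V1) V2 E2) - real (card V1 choose 2)
          - real (card V - card V1) * (real t - 1))
         / (real (card V1) - real t + 1))
       / real (card V1 choose t)"
proof -
  let ?U = "f ` V1" and ?W = "V - f ` V1"
  let ?Ts = "{T. T \<subseteq> ?U \<and> card T = t}"
  let ?bound = "(real (card E) - real (ex (card V - card V1) V2 E2) - real (card V1 choose 2)
                  - real (card V - card V1) * (real t - 1)) / (real (card V1) - real t + 1)"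
  have "finite V" "?U \<subseteq> V" "card ?U = card V1"
    using G copy by (auto simp: graph_def embedding_def card_image)
  then have "finite ?U" "card ?W = card V - card V1" "card ?Ts = card V1 choose t"
    by (auto simp: card_Diff_subset finite_subset n_subsets)
  have "real (card E) \<le> real (card V1 choose 2) + real (ex (card V - card V1) V2 E2)
                          + (\<Sum>v\<in>?W. real (card (common_nbhd E {v} ?U)))"
    using card_edges_le_if_disj_union_free[OF G free copy]
    unfolding of_nat_sum[symmetric] of_nat_add[symmetric] of_nat_le_iff .
  then have "?bound \<le> ((\<Sum>v\<in>?W. real (card (common_nbhd E {v} ?U))) - real (card ?W) * (real t - 1))
                         / (real (card V1) - real t + 1)"
    using t \<open>card ?W = card V - card V1\<close> by (intro divide_right_mono) auto
  also have "\<dots> \<le> (\<Sum>T\<in>?Ts. real (card (common_nbhd E T ?W)))"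
    using sum_card_common_nbhd_ge[of ?U ?W t E] \<open>finite V\<close> \<open>finite ?U\<close> t \<open>card ?U = card V1\<close>
    by simp
  finally have bound_le_sum: "?bound \<le> (\<Sum>T\<in>?Ts. real (card (common_nbhd E T ?W)))" .
  have "finite ?Ts" "?Ts \<noteq> {}"
    using \<open>card ?Ts = card V1 choose t\<close> t card_gt_0_iff[of ?Ts] by auto
  then obtain T where "T \<in> ?Ts" "?bound / card ?Ts \<le> real (card (common_nbhd E T ?W))"
    using exists_ge_average[OF _ _ bound_le_sum] by blast
  then show ?thesis
    using \<open>card ?Ts = card V1 choose t\<close> by auto
qed

end
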